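(* Let $(K,C,S)$ be a layered simplicial complex and let $(K,C,S)\searrow(K-\{f,p\},C-\{f,p\},S)$ be an elementary $C$-collapse of a principal simplex $p\in C$ using the free face $f\in C$ of $p$. Then the freely orthogonal deformation retraction $H:|K|\times I\to|K|$ associated to $p$ and $f$ satisfies $H_t(|K|-|S|)\subseteq|K|-|S|$ and $H_t(|S|)=|S|$ for all $t\in I$.
   Context: A simplicial complex is a set of finite nonempty sets (simplices) closed under passing to nonempty subsets (faces); $|K|$ is its geometric realization and $|s|$ the closed geometric simplex. A simplex is principal in $K$ if it is not a proper face of any simplex of $K$; $f$ is free in $K$ if it is a proper face of a principal simplex $p$ and of no other simplex of $K$. A layered simplicial complex is $(K,C,S)$ with $C,S$ disjoint subcomplexes of $K$. An elementary $C$-collapse uses $p\in C$ principal in $K$ and a face $f$ of $p$ free in $K$. Freely orthogonal deformation retraction: let $p$ be principal in $K$ with free face $f$, let $v$ be the vertex of $p$ not in $f$ and $f_1,\dots,f_m$ the vertices of $f$ ($m\ge1$). Identify $|p|$ via barycentric coordinates with $\{x\in\mathbb R^m: x_i\ge0,\ \sum x_i\le1\}$ ($v\mapsto0$, $f_i\mapsto e_i$). Define $r:|p|\to|p|$ by $r(x)=(x_1-x_j,\dots,x_m-x_j)$ where $x_j=\min\{x_1,\dots,x_m\}$, and $H:|K|\times I\to|K|$ by $H(x,t)=(1-t)x+t\,r(x)$ for $x\in|p|$ and $H(x,t)=x$ for $x\in|K|-|p|$; $H_t=H(\cdot,t)$. *)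

theory Defs
  imports Complex_Main
begin

definition simplicial_complex :: "'v set set \<Rightarrow> bool" where
  "simplicial_complex K \<longleftrightarrow>
     (\<forall>s\<in>K. finite s \<and> s \<noteq> {}) \<and>
     (\<forall>s\<in>K. \<forall>t. t \<subseteq> s \<and> t \<noteq> {} \<longrightarrow> t \<in> K)"

definition subcomplex :: "'v set set \<Rightarrow> 'v set set \<Rightarrow> bool" where
  "subcomplex L K \<longleftrightarrow> simplicial_complex L \<and> L \<subseteq> K"

definition layered_complex :: "'v set set \<Rightarrow> 'v set set \<Rightarrow> 'v set set \<Rightarrow> bool" where
  "layered_complex K C S \<longleftrightarrow>
     simplicial_complex K \<and> subcomplex C K \<and> subcomplex S K \<and> C \<inter> S = {}"

definition principal :: "'v set set \<Rightarrow> 'v set \<Rightarrow> bool" where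
  "principal K p \<longleftrightarrow> p \<in> K \<and> (\<forall>q\<in>K. \<not> p \<subset> q)"

definition free_face_of :: "'v set set \<Rightarrow> 'v set \<Rightarrow> 'v set \<Rightarrow> bool" where
  "free_face_of K f p \<longleftrightarrow> principal K p \<and> f \<in> K \<and> f \<subset> p \<and>
     (\<forall>q\<in>K. f \<subset> q \<longrightarrow> q = p)"

definition elementary_C_collapse ::
  "'v set set \<Rightarrow> 'v set set \<Rightarrow> 'v set set \<Rightarrow> 'v set \<Rightarrow> 'v set \<Rightarrow> bool" where
  "elementary_C_collapse K C S p f \<longleftrightarrow>
     layered_complex K C S \<and> p \<in> C \<and> f \<in> C \<and> principal K p \<and> free_face_of K f p"

text \<open>Points of the realization are functions assigning barycentric coordinates to vertices.\<close>
definition simplex_pts :: "'v set \<Rightarrow> ('v \<Rightarrow> real) set" where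
  "simplex_pts s = {x. (\<forall>w. 0 \<le> x w) \<and> (\<forall>w. w \<notin> s \<longrightarrow> x w = 0) \<and> sum x s = 1}"

definition realization :: "'v set set \<Rightarrow> ('v \<Rightarrow> real) set" where
  "realization K = (\<Union>s\<in>K. simplex_pts s)"

text \<open>In barycentric coordinates, r(x) has
  coordinate x(f_i) - min_j x(f_j) at each vertex f_i of f, and the remaining mass
  1 - sum_i (x(f_i) - min) = x(v) + m * min at v.\<close>
definition free_retraction :: "'v set \<Rightarrow> 'v set \<Rightarrow> ('v \<Rightarrow> real) \<Rightarrow> ('v \<Rightarrow> real)" where
  "free_retraction p f x =
     (let v = (THE v. v \<in> p \<and> v \<notin> f); \<mu> = Min (x ` f) in
      (\<lambda>w. if w \<in> f then x w - \<mu>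
           else if w = v then 1 - (\<Sum>u\<in>f. x u - \<mu>)
           else 0))"

definition free_orth_homotopy ::
  "'v set \<Rightarrow> 'v set \<Rightarrow> real \<Rightarrow> ('v \<Rightarrow> real) \<Rightarrow> ('v \<Rightarrow> real)" where
  "free_orth_homotopy p f t x =
     (if x \<in> simplex_pts p
      then (\<lambda>w. (1 - t) * x w + t * free_retraction p f x w)
      else x)"

end

theory Submission
  imports Defs
begin

text \<open>The support of a point of the realization is a face of every simplex carrying the point,
  so a point carried both by a simplex of C and by a simplex of S would yield a common simplex
  of C and S.  Hence |p| misses |S|: the homotopy, which moves only points of |p|, fixes |S|
  pointwise, and it cannot push a point of |K| - |S| into |S| as long as it keeps |p| invariant.
  Invariance of |p| comes from freeness of f, which forces p to be f plus a single apex v: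
  r(x) lies in |p| because the mass removed from the vertices of f reappears at v, and H_t(x)
  is a convex combination of x and r(x).\<close>

lemma simplicial_complex_face:
  assumes "simplicial_complex K" "s \<in> K" "t \<subseteq> s" "t \<noteq> {}"
  shows "t \<in> K"
  using assms unfolding simplicial_complex_def by blast

lemma simplex_pts_support:
  assumes "x \<in> simplex_pts s"
  shows "{w. x w \<noteq> 0} \<subseteq> s" and "{w. x w \<noteq> 0} \<noteq> {}"
proof -
  show "{w. x w \<noteq> 0} \<subseteq> s" using assms by (auto simp: simplex_pts_def)
  show "{w. x w \<noteq> 0} \<noteq> {}"
  proof
    assume "{w. x w \<noteq> 0} = {}"
    then have "sum x s = 0" by simp
    with assms show False by (simp add: simplex_pts_def)
  qed
qed

lemma simplex_pts_disjoint:
  assumes "simplicial_complex L" "simplicial_complex M" "L \<inter> M = {}"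
    and "s \<in> L" "s' \<in> M"
  shows "simplex_pts s \<inter> simplex_pts s' = {}"
proof (rule equals0I)
  fix x assume x: "x \<in> simplex_pts s \<inter> simplex_pts s'"
  let ?supp = "{w. x w \<noteq> 0}"
  have "?supp \<in> L" "?supp \<in> M"
    using x simplex_pts_support assms simplicial_complex_face by (metis IntD1 IntD2)+
  with assms(3) show False by blast
qed

lemma simplex_pts_disjoint_realization:
  assumes "simplicial_complex L" "simplicial_complex M" "L \<inter> M = {}" "s \<in> L"
  shows "simplex_pts s \<inter> realization M = {}"
  using simplex_pts_disjoint[OF assms(1-4)] unfolding realization_def by blast

lemma simplex_pts_convex:
  assumes "x \<in> simplex_pts s" "y \<in> simplex_pts s" "0 \<le> t" "t \<le> 1"
  shows "(\<lambda>w. (1 - t) * x w + t * y w) \<in> simplex_pts s"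
proof -
  have "(\<Sum>w\<in>s. (1 - t) * x w + t * y w) = (1 - t) * sum x s + t * sum y s"
    by (simp add: sum.distrib sum_distrib_left)
  with assms show ?thesis by (simp add: simplex_pts_def)
qed

lemma free_face_insert_apex:
  assumes "simplicial_complex K" "free_face_of K f p"
  obtains v where "v \<notin> f" "p = insert v f"
proof -
  have "p \<in> K" "f \<subset> p" and only_p: "\<forall>q\<in>K. f \<subset> q \<longrightarrow> q = p"
    using assms(2) by (auto simp: free_face_of_def principal_def)
  then obtain v where v: "v \<in> p" "v \<notin> f" by blast
  have "insert v f \<subseteq> p" using v \<open>f \<subset> p\<close> by blast
  then have "insert v f \<in> K"
    using simplicial_complex_face[OF assms(1) \<open>p \<in> K\<close>] by blast
  moreover have "f \<subset> insert v f" using v(2) by blast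
  ultimately have "p = insert v f" using only_p by metis
  with v(2) show thesis by (rule that)
qed

lemma free_retraction_in_simplex_pts:
  assumes K: "simplicial_complex K" and ff: "free_face_of K f p"
    and x: "x \<in> simplex_pts p"
  shows "free_retraction p f x \<in> simplex_pts p"
proof -
  obtain v where v: "v \<notin> f" and p: "p = insert v f"
    using free_face_insert_apex[OF K ff] .
  have f: "finite f" "f \<noteq> {}"
    using ff K by (auto simp: free_face_of_def simplicial_complex_def)
  have apex: "(THE v. v \<in> p \<and> v \<notin> f) = v" using p v by auto
  define \<mu> where "\<mu> = Min (x ` f)"
  have \<mu>_le: "\<mu> \<le> x u" if "u \<in> f" for u unfolding \<mu>_def using f that by simp
  have \<mu>_nonneg: "0 \<le> \<mu>" unfolding \<mu>_def using f x by (simp add: simplex_pts_def)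
  define r where "r = free_retraction p f x"
  have r: "r = (\<lambda>w. if w \<in> f then x w - \<mu> else if w = v then 1 - (\<Sum>u\<in>f. x u - \<mu>) else 0)"
    unfolding r_def free_retraction_def apex \<mu>_def Let_def ..
  have "x v + sum x f = 1" using x p v f by (simp add: simplex_pts_def)
  then have r_apex: "r v = x v + real (card f) * \<mu>"
    using v by (simp add: r sum_subtractf)
  have "0 \<le> r v" using r_apex \<mu>_nonneg x by (simp add: simplex_pts_def)
  then have "0 \<le> r w" for w using \<mu>_le[of w] by (auto simp: r split: if_splits)
  moreover have "sum r p = 1"
    using v f by (simp add: p r sum_subtractf)
  moreover have "r w = 0" if "w \<notin> p" for w using that by (simp add: p r)
  ultimately show ?thesis unfolding r_def simplex_pts_def by blast
qed

lemma free_orth_homotopy_in_simplex_pts: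
  assumes "simplicial_complex K" "free_face_of K f p" "0 \<le> t" "t \<le> 1"
    and x: "x \<in> simplex_pts p"
  shows "free_orth_homotopy p f t x \<in> simplex_pts p"
  unfolding free_orth_homotopy_def if_P[OF x]
  using simplex_pts_convex[OF x free_retraction_in_simplex_pts[OF assms(1,2) x] assms(3,4)] .

lemma free_orth_homotopy_image_subset:
  assumes "simplicial_complex K" "free_face_of K f p" "0 \<le> t" "t \<le> 1"
  shows "free_orth_homotopy p f t ` A \<subseteq> A \<union> simplex_pts p"
  using free_orth_homotopy_in_simplex_pts[OF assms]
  by (auto simp: free_orth_homotopy_def)

lemma free_orth_homotopy_image_eq:
  assumes "A \<inter> simplex_pts p = {}"
  shows "free_orth_homotopy p f t ` A = A"
  using assms by (auto simp: free_orth_homotopy_def)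

theorem lemma5p4:
  fixes K C S :: "'v set set" and p f :: "'v set"
  assumes "elementary_C_collapse K C S p f"
  shows "\<forall>t\<in>{0..1::real}.
           free_orth_homotopy p f t ` (realization K - realization S)
              \<subseteq> realization K - realization S
         \<and> free_orth_homotopy p f t ` realization S = realization S"
proof
  fix t :: real assume t: "t \<in> {0..1}"
  have K: "simplicial_complex K" and "simplicial_complex C" "simplicial_complex S"
    and "C \<inter> S = {}" "p \<in> C" and ff: "free_face_of K f p"
    using assms by (auto simp: elementary_C_collapse_def layered_complex_def subcomplex_def)
  then have p_off_S: "simplex_pts p \<inter> realization S = {}"
    using simplex_pts_disjoint_realization by blast
  have "simplex_pts p \<subseteq> realization K"
    using ff by (auto simp: realization_def free_face_of_def principal_def)
  with p_off_S free_orth_homotopy_image_subset[OF K ff, of t "realization K - realization S"] t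
  show "free_orth_homotopy p f t ` (realization K - realization S)
          \<subseteq> realization K - realization S
        \<and> free_orth_homotopy p f t ` realization S = realization S"
    using free_orth_homotopy_image_eq[of "realization S" p f t] by auto
qed

end
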